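(* Let $T>0$, $0<\eta<T$, $0<\alpha <\frac{2T}{\eta ^{2}}$ and $0\leq\beta < \frac{2T-\alpha \eta ^{2}}{\alpha \eta ^{2}-2\eta +2T}$. If $y\in C([0,T],[0,\infty))$, then the unique solution $u$ of \[ u''(t)+y(t)=0,\ t\in(0,T),\qquad u(0)=\beta u(\eta),\quad u(T)=\alpha\int_0^\eta u(s)\,ds \] satisfies \[ \min_{t\in [\eta,T]}u(t)\geq \gamma \|u\|,\qquad \|u\|=\max_{t\in[0,T]}|u(t)|, \] where \[ \gamma:=\min\left\{\frac{\eta}{T}, \frac{\alpha(\beta+1)\eta^{2}}{2T}, \frac{\alpha(\beta+1)\eta(T-\eta)}{2T-\alpha(\beta+1)\eta^{2}}\right\}\in(0,1). \]
   Context: A solution is a function $u\in C^2([0,T])$ satisfying the differential equation on $(0,T)$ and the two boundary conditions; under the stated hypotheses this problem has a unique solution. *)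

theory Defs
  imports "HOL-Analysis.Analysis"
begin

definition C2_on :: "real \<Rightarrow> (real \<Rightarrow> real) \<Rightarrow> bool" where
  "C2_on T u \<longleftrightarrow> (\<exists>u1 u2.
      (\<forall>t\<in>{0..T}. (u has_real_derivative u1 t) (at t within {0..T})) \<and>
      (\<forall>t\<in>{0..T}. (u1 has_real_derivative u2 t) (at t within {0..T})) \<and>
      continuous_on {0..T} u2)"

definition is_solution ::
  "real \<Rightarrow> real \<Rightarrow> real \<Rightarrow> real \<Rightarrow> (real \<Rightarrow> real) \<Rightarrow> (real \<Rightarrow> real) \<Rightarrow> bool" where
  "is_solution T \<eta> \<alpha> \<beta> y u \<longleftrightarrow>
     C2_on T u \<and>
     (\<forall>t\<in>{0<..<T}. deriv (deriv u) t + y t = 0) \<and>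
     u 0 = \<beta> * u \<eta> \<and>
     u T = \<alpha> * integral {0..\<eta>} u"

definition sup_norm :: "real \<Rightarrow> (real \<Rightarrow> real) \<Rightarrow> real" where
  "sup_norm T u = Sup ((\<lambda>t. \<bar>u t\<bar>) ` {0..T})"

definition gamma_const :: "real \<Rightarrow> real \<Rightarrow> real \<Rightarrow> real \<Rightarrow> real" where
  "gamma_const T \<eta> \<alpha> \<beta> = Min {\<eta> / T, \<alpha> * (\<beta> + 1) * \<eta>^2 / (2 * T),
      \<alpha> * (\<beta> + 1) * \<eta> * (T - \<eta>) / (2 * T - \<alpha> * (\<beta> + 1) * \<eta>^2)}"

end

(*
  Since u'' = -y \<le> 0, the solution is concave and lies above its chords. The trapezoidal bound
  \<integral>\<^sub>0\<^sup>\<eta> u \<ge> \<eta> (u 0 + u \<eta>) / 2 turns the integral condition into 2 u T \<ge> \<alpha> (\<beta> + 1) \<eta> u \<eta>;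
  combined with the chord through 0, \<eta>, T and the bound on \<beta>, this forces u \<eta> \<ge> 0 and
  hence u \<ge> 0. On [\<eta>, T] a concave u is at least min (u \<eta>) (u T), and both values are compared
  with the maximum u \<tau> by chord estimates, according to whether \<tau> lies right or left of \<eta>;
  these comparisons produce the three terms in the definition of \<gamma>.
*)

theory Submission
  imports Defs
begin

lemma mvt_within_Icc:
  fixes f f' :: "real \<Rightarrow> real"
  assumes deriv: "\<And>t. t \<in> {a..b} \<Longrightarrow> (f has_real_derivative f' t) (at t within {a..b})"
    and "a \<le> x" "x \<le> y" "y \<le> b"
  shows "\<exists>\<xi>\<in>{x..y}. f y - f x = f' \<xi> * (y - x)"
proof -
  have "\<exists>\<xi>\<in>{x..y}. f y - f x = (\<lambda>h. f' \<xi> * h) (y - x)"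
  proof (rule mvt_very_simple[OF \<open>x \<le> y\<close>])
    fix t assume "x \<le> t" "t \<le> y"
    with assms have "(f has_real_derivative f' t) (at t within {x..y})"
      by (intro DERIV_subset[OF deriv]) auto
    then show "(f has_derivative (\<lambda>h. f' t * h)) (at t within {x..y})"
      by (simp add: has_field_derivative_def)
  qed
  then show ?thesis by simp
qed

lemma concave_on_Icc_if_deriv2_nonpos:
  fixes f f' f'' :: "real \<Rightarrow> real"
  assumes f': "\<And>t. t \<in> {a..b} \<Longrightarrow> (f has_real_derivative f' t) (at t within {a..b})"
    and f'': "\<And>t. t \<in> {a..b} \<Longrightarrow> (f' has_real_derivative f'' t) (at t within {a..b})"
    and nonpos: "\<And>t. t \<in> {a..b} \<Longrightarrow> f'' t \<le> 0"
  shows "concave_on {a..b} f"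
proof
  have antimono: "f' q \<le> f' p" if pq: "a \<le> p" "p \<le> q" "q \<le> b" for p q
  proof -
    obtain r where r: "r \<in> {p..q}" "f' q - f' p = f'' r * (q - p)"
      using mvt_within_Icc[OF f'' pq] by blast
    have "f'' r * (q - p) \<le> 0"
      using nonpos[of r] r(1) pq by (intro mult_nonpos_nonneg) auto
    then show ?thesis using r(2) by simp
  qed
  fix t x y :: real
  assume t: "0 < t" "t < 1" and xy: "x \<in> {a..b}" "y \<in> {a..b}" "x < y"
  define z where "z = (1 - t) * x + t * y"
  have zx: "z - x = t * (y - x)" and yz: "y - z = (1 - t) * (y - x)"
    by (simp_all add: z_def algebra_simps)
  then have "x < z" "z < y" using t xy by (metis diff_gt_0_iff_gt mult_pos_pos)+
  obtain p where p: "p \<in> {x..z}" "f z - f x = f' p * (z - x)"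
    using mvt_within_Icc[OF f', of x z] xy \<open>x < z\<close> \<open>z < y\<close> by force
  obtain q where q: "q \<in> {z..y}" "f y - f z = f' q * (y - z)"
    using mvt_within_Icc[OF f', of z y] xy \<open>x < z\<close> \<open>z < y\<close> by force
  have "f' q * (t * (1 - t) * (y - x)) \<le> f' p * (t * (1 - t) * (y - x))"
    using antimono[of p q] p q xy t by (intro mult_right_mono) auto
  moreover have "(f y - f z) * t = f' q * (t * (1 - t) * (y - x))"
    using q(2) yz by simp
  moreover have "(f z - f x) * (1 - t) = f' p * (t * (1 - t) * (y - x))"
    using p(2) zx by simp
  ultimately have "(f y - f z) * t \<le> (f z - f x) * (1 - t)" by linarith
  then show "(1 - t) * f x + t * f y \<le> f ((1 - t) *\<^sub>R x + t *\<^sub>R y)"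
    by (simp add: z_def algebra_simps)
qed simp

lemma concave_on_subset: "concave_on T f \<Longrightarrow> S \<subseteq> T \<Longrightarrow> convex S \<Longrightarrow> concave_on S f"
  by (simp add: concave_on_def convex_on_subset)

lemma concave_on_chord:
  fixes f :: "real \<Rightarrow> real"
  assumes "concave_on S f" "{x..w} \<subseteq> S" "z \<in> {x..w}"
  shows "(w - z) * f x + (z - x) * f w \<le> (w - x) * f z"
proof (cases "x < w")
  case True
  have "concave_on {x..w} f"
    using assms(1,2) by (rule concave_on_subset) simp
  then have "(f w - f x) / (w - x) * (z - x) + f x \<le> f z"
    using concave_onD_Icc' assms(3) by blast
  then show ?thesis using True by (simp add: field_simps)
next
  case False
  with assms(3) have "z = x" "w = x" by auto
  then show ?thesis by simp
qed

lemma concave_on_Icc_min_le: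
  fixes f :: "real \<Rightarrow> real"
  assumes "concave_on {a..b} f" "x \<in> {a..b}"
  shows "min (f a) (f b) \<le> f x"
proof -
  have "(b - x) * min (f a) (f b) + (x - a) * min (f a) (f b) \<le> (b - x) * f a + (x - a) * f b"
    using assms(2) by (intro add_mono mult_left_mono) auto
  also have "\<dots> \<le> (b - a) * f x"
    using concave_on_chord[OF assms(1) order.refl assms(2)] .
  finally have "(b - a) * min (f a) (f b) \<le> (b - a) * f x" by (simp add: algebra_simps)
  then show ?thesis using assms(2) by (cases "a = b") auto
qed

lemma trapezoid_le_integral_concave:
  fixes f :: "real \<Rightarrow> real"
  assumes "concave_on {a..b} f" "continuous_on {a..b} f" "a < b"
  shows "(b - a) * (f a + f b) / 2 \<le> integral {a..b} f"
proof -
  define c where "c = (f b - f a) / (b - a)"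
  define chord where "chord s = f a + c * (s - a)" for s
  define F where "F s = f a * s + c * (s - a)\<^sup>2 / 2" for s
  have "(chord has_integral F b - F a) {a..b}"
  proof (rule fundamental_theorem_of_calculus)
    fix s assume "s \<in> {a..b}"
    have "(F has_real_derivative chord s) (at s within {a..b})"
      unfolding F_def chord_def by (auto intro!: derivative_eq_intros)
    then show "(F has_vector_derivative chord s) (at s within {a..b})"
      by (simp add: has_real_derivative_iff_has_vector_derivative)
  qed (use \<open>a < b\<close> in simp)
  moreover have "F b - F a = (b - a) * (f a + f b) / 2"
    using \<open>a < b\<close> by (simp add: F_def c_def field_simps power2_eq_square)
  moreover have "chord s \<le> f s" if "s \<in> {a..b}" for s
    using concave_onD_Icc'[OF assms(1) that] by (simp add: chord_def c_def algebra_simps)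
  ultimately show ?thesis
    using has_integral_le integrable_continuous_interval[OF assms(2)] by (metis integrable_integral)
qed

lemma C2_on_imp_continuous_on:
  assumes "C2_on T u"
  shows "continuous_on {0..T} u"
proof -
  obtain u1 where "\<forall>t\<in>{0..T}. (u has_real_derivative u1 t) (at t within {0..T})"
    using assms unfolding C2_on_def by blast
  then show ?thesis
    by (intro has_derivative_continuous_on[where f'="\<lambda>t. (*) (u1 t)"])
       (auto simp: has_field_derivative_def)
qed

lemma is_solution_concave_on:
  assumes sol: "is_solution T \<eta> \<alpha> \<beta> y u" and "0 < T"
    and y_nonneg: "\<And>t. t \<in> {0<..<T} \<Longrightarrow> 0 \<le> y t"
  shows "concave_on {0..T} u"
proof -
  obtain u1 u2
    where u1: "\<And>t. t \<in> {0..T} \<Longrightarrow> (u has_real_derivative u1 t) (at t within {0..T})"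
      and u2: "\<And>t. t \<in> {0..T} \<Longrightarrow> (u1 has_real_derivative u2 t) (at t within {0..T})"
      and u2_cont: "continuous_on {0..T} u2"
    using sol unfolding is_solution_def C2_on_def by blast
  have u2_eq: "u2 t = - y t" if t: "t \<in> {0<..<T}" for t
  proof -
    have deriv_u: "deriv u s = u1 s" if "s \<in> {0<..<T}" for s
    proof (rule DERIV_imp_deriv)
      show "(u has_real_derivative u1 s) (at s)"
        using u1[of s] that by (simp add: at_within_Icc_at)
    qed
    have "(u1 has_real_derivative u2 t) (at t)"
      using u2[of t] t by (simp add: at_within_Icc_at)
    then have "(deriv u has_real_derivative u2 t) (at t)"
      by (rule has_field_derivative_transform_within_open[where S="{0<..<T}"])
         (use t deriv_u in auto)
    then have "deriv (deriv u) t = u2 t" by (rule DERIV_imp_deriv)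
    moreover have "deriv (deriv u) t + y t = 0" using sol t unfolding is_solution_def by blast
    ultimately show ?thesis by simp
  qed
  have closure: "closure {0<..<T} = {0..T}" using \<open>0 < T\<close> by simp
  have "u2 t \<le> 0" if "t \<in> {0..T}" for t
    by (rule continuous_le_on_closure[of "{0<..<T}"]) (use u2_cont that y_nonneg u2_eq closure in auto)
  with u1 u2 show ?thesis by (rule concave_on_Icc_if_deriv2_nonpos)
qed

locale bvp_parameters =
  fixes T \<eta> \<alpha> \<beta> :: real
  assumes eta_pos: "0 < \<eta>" and eta_less: "\<eta> < T"
    and alpha_pos: "0 < \<alpha>"
    and beta_nonneg: "0 \<le> \<beta>"
    and beta_less: "\<beta> < (2 * T - \<alpha> * \<eta>^2) / (\<alpha> * \<eta>^2 - 2 * \<eta> + 2 * T)"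
begin

lemma beta_margin_pos: "0 < (2 * T - \<alpha> * \<eta>^2) - \<beta> * (\<alpha> * \<eta>^2 - 2 * \<eta> + 2 * T)"
proof -
  have "0 < \<alpha> * \<eta>^2" using alpha_pos eta_pos by simp
  then have "0 < \<alpha> * \<eta>^2 - 2 * \<eta> + 2 * T" using eta_less by linarith
  with beta_less show ?thesis by (simp add: pos_less_divide_eq algebra_simps)
qed

lemma denominator_pos: "0 < 2 * T - \<alpha> * (\<beta> + 1) * \<eta>^2"
proof -
  have "0 \<le> \<beta> * (2 * T - 2 * \<eta>)" using beta_nonneg eta_less by simp
  with beta_margin_pos show ?thesis by (simp add: algebra_simps)
qed

lemma gamma_const_eq_min:
  "gamma_const T \<eta> \<alpha> \<beta> = min (\<eta> / T) (min (\<alpha> * (\<beta> + 1) * \<eta>^2 / (2 * T))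
     (\<alpha> * (\<beta> + 1) * \<eta> * (T - \<eta>) / (2 * T - \<alpha> * (\<beta> + 1) * \<eta>^2)))"
  by (simp add: gamma_const_def)

lemma gamma_const_pos: "0 < gamma_const T \<eta> \<alpha> \<beta>"
proof -
  have "0 < \<eta> / T" using eta_pos eta_less by simp
  moreover have "0 < \<alpha> * (\<beta> + 1) * \<eta>^2 / (2 * T)"
    using alpha_pos beta_nonneg eta_pos eta_less by (intro divide_pos_pos mult_pos_pos) auto
  moreover have "0 < \<alpha> * (\<beta> + 1) * \<eta> * (T - \<eta>) / (2 * T - \<alpha> * (\<beta> + 1) * \<eta>^2)"
    using alpha_pos beta_nonneg eta_pos eta_less denominator_pos
    by (intro divide_pos_pos mult_pos_pos) auto
  ultimately show ?thesis by (simp only: gamma_const_eq_min min_less_iff_conj)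
qed

lemma gamma_const_le:
  "gamma_const T \<eta> \<alpha> \<beta> \<le> \<eta> / T"
  "gamma_const T \<eta> \<alpha> \<beta> \<le> \<alpha> * (\<beta> + 1) * \<eta>^2 / (2 * T)"
  "gamma_const T \<eta> \<alpha> \<beta> \<le> \<alpha> * (\<beta> + 1) * \<eta> * (T - \<eta>) / (2 * T - \<alpha> * (\<beta> + 1) * \<eta>^2)"
  by (simp_all add: gamma_const_eq_min)

lemma gamma_const_less_one: "gamma_const T \<eta> \<alpha> \<beta> < 1"
proof -
  have "\<eta> / T < 1" using eta_pos eta_less by simp
  then show ?thesis by (simp only: gamma_const_eq_min min_less_iff_disj) simp
qed

end

locale concave_bvp_solution = bvp_parameters +
  fixes u :: "real \<Rightarrow> real"
  assumes concave: "concave_on {0..T} u"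
    and continuous: "continuous_on {0..T} u"
    and bc_left: "u 0 = \<beta> * u \<eta>"
    and bc_right: "u T = \<alpha> * integral {0..\<eta>} u"
begin

abbreviation \<gamma> :: real where "\<gamma> \<equiv> gamma_const T \<eta> \<alpha> \<beta>"

lemma chord:
  assumes "0 \<le> x" "w \<le> T" "z \<in> {x..w}"
  shows "(w - z) * u x + (z - x) * u w \<le> (w - x) * u z"
  using concave_on_chord[OF concave _ assms(3)] assms(1,2) by auto

lemma right_end_ge: "\<alpha> * (\<beta> + 1) * \<eta> * u \<eta> \<le> 2 * u T"
proof -
  have "concave_on {0..\<eta>} u" "continuous_on {0..\<eta>} u"
    using concave_on_subset[OF concave] continuous_on_subset[OF continuous] eta_less by auto
  then have "(\<eta> - 0) * (u 0 + u \<eta>) / 2 \<le> integral {0..\<eta>} u"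
    using eta_pos by (intro trapezoid_le_integral_concave)
  then have "\<alpha> * (\<eta> * (u 0 + u \<eta>) / 2) \<le> u T"
    using alpha_pos bc_right by simp
  then show ?thesis using bc_left by (simp add: algebra_simps)
qed

lemma eta_value_nonneg: "0 \<le> u \<eta>"
proof -
  have "(T - \<eta>) * u 0 + \<eta> * u T \<le> T * u \<eta>"
    using chord[of 0 T \<eta>] eta_pos eta_less by simp
  moreover have "\<eta> * (\<alpha> * (\<beta> + 1) * \<eta> * u \<eta>) \<le> \<eta> * (2 * u T)"
    using right_end_ge eta_pos by simp
  ultimately have "0 \<le> u \<eta> * ((2 * T - \<alpha> * \<eta>^2) - \<beta> * (\<alpha> * \<eta>^2 - 2 * \<eta> + 2 * T))"
    using bc_left by (simp add: algebra_simps power2_eq_square)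
  then show ?thesis using beta_margin_pos by (simp add: zero_le_mult_iff)
qed

lemma nonneg:
  assumes "t \<in> {0..T}"
  shows "0 \<le> u t"
proof -
  have "0 \<le> \<alpha> * (\<beta> + 1) * \<eta> * u \<eta>"
    using alpha_pos beta_nonneg eta_pos eta_value_nonneg by simp
  then have "0 \<le> u T" using right_end_ge by linarith
  moreover have "0 \<le> u 0" using bc_left beta_nonneg eta_value_nonneg by simp
  ultimately show ?thesis using concave_on_Icc_min_le[OF concave assms] by simp
qed

lemma bounds_beyond_eta:
  assumes "\<tau> \<in> {\<eta>..T}"
  shows "\<eta> * u \<tau> \<le> T * u \<eta>"
    and "\<alpha> * (\<beta> + 1) * \<eta>^2 * u \<tau> \<le> 2 * T * u T"
proof -
  have "(\<tau> - \<eta>) * u 0 + \<eta> * u \<tau> \<le> \<tau> * u \<eta>"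
    using chord[of 0 \<tau> \<eta>] assms eta_pos by simp
  moreover have "0 \<le> (\<tau> - \<eta>) * u 0"
    using assms nonneg[of 0] eta_pos eta_less by (intro mult_nonneg_nonneg) auto
  moreover have "\<tau> * u \<eta> \<le> T * u \<eta>"
    using assms eta_value_nonneg by (simp add: mult_right_mono)
  ultimately show eta: "\<eta> * u \<tau> \<le> T * u \<eta>" by linarith
  have "\<alpha> * (\<beta> + 1) * \<eta> * (\<eta> * u \<tau>) \<le> \<alpha> * (\<beta> + 1) * \<eta> * (T * u \<eta>)"
    using eta alpha_pos beta_nonneg eta_pos by (intro mult_left_mono) auto
  also have "\<dots> \<le> T * (2 * u T)"
    using mult_left_mono[OF right_end_ge, of T] eta_less eta_pos by (simp add: algebra_simps)
  finally show "\<alpha> * (\<beta> + 1) * \<eta>^2 * u \<tau> \<le> 2 * T * u T"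
    by (simp add: algebra_simps power2_eq_square)
qed

lemma bounds_if_max_before_eta:
  assumes "\<tau> \<in> {0..\<eta>}" and max: "\<And>t. t \<in> {0..T} \<Longrightarrow> u t \<le> u \<tau>"
  shows "u T \<le> u \<eta>"
    and "\<alpha> * (\<beta> + 1) * \<eta> * (T - \<eta>) * u \<tau> \<le> (2 * T - \<alpha> * (\<beta> + 1) * \<eta>^2) * u T"
proof -
  have chord_\<tau>: "(T - \<eta>) * u \<tau> + (\<eta> - \<tau>) * u T \<le> (T - \<tau>) * u \<eta>"
    using chord[of \<tau> T \<eta>] assms(1) eta_less by simp
  moreover have "(T - \<eta>) * u T \<le> (T - \<eta>) * u \<tau>"
    using max[of T] eta_pos eta_less by (intro mult_left_mono) auto
  ultimately have "(T - \<tau>) * u T \<le> (T - \<tau>) * u \<eta>" by (simp add: algebra_simps)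
  then show le: "u T \<le> u \<eta>" using assms(1) eta_less by simp
  have "\<tau> * u T \<le> \<tau> * u \<eta>" using le assms(1) by (simp add: mult_left_mono)
  with chord_\<tau> have "(T - \<eta>) * u \<tau> + \<eta> * u T \<le> T * u \<eta>" by (simp add: algebra_simps)
  then have "\<alpha> * (\<beta> + 1) * \<eta> * ((T - \<eta>) * u \<tau> + \<eta> * u T) \<le> \<alpha> * (\<beta> + 1) * \<eta> * (T * u \<eta>)"
    using alpha_pos beta_nonneg eta_pos by (intro mult_left_mono) auto
  also have "\<dots> \<le> T * (2 * u T)"
    using mult_left_mono[OF right_end_ge, of T] eta_less eta_pos by (simp add: algebra_simps)
  finally show "\<alpha> * (\<beta> + 1) * \<eta> * (T - \<eta>) * u \<tau> \<le> (2 * T - \<alpha> * (\<beta> + 1) * \<eta>^2) * u T"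
    by (simp add: algebra_simps power2_eq_square)
qed

lemma gamma_bound_at_max:
  assumes "\<tau> \<in> {0..T}" and max: "\<And>t. t \<in> {0..T} \<Longrightarrow> u t \<le> u \<tau>"
  shows "\<gamma> * u \<tau> \<le> u \<eta> \<and> \<gamma> * u \<tau> \<le> u T"
proof -
  have T_pos: "0 < T" using eta_pos eta_less by simp
  have u\<tau>: "0 \<le> u \<tau>" using nonneg assms(1) by blast
  show ?thesis
  proof (cases "\<eta> \<le> \<tau>")
    case True
    then have "\<eta> / T * u \<tau> \<le> u \<eta>" "\<alpha> * (\<beta> + 1) * \<eta>^2 / (2 * T) * u \<tau> \<le> u T"
      using bounds_beyond_eta[of \<tau>] assms(1) T_pos by (simp_all add: field_simps)
    moreover have "\<gamma> * u \<tau> \<le> \<eta> / T * u \<tau>"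
      using gamma_const_le(1) u\<tau> by (rule mult_right_mono)
    moreover have "\<gamma> * u \<tau> \<le> \<alpha> * (\<beta> + 1) * \<eta>^2 / (2 * T) * u \<tau>"
      using gamma_const_le(2) u\<tau> by (rule mult_right_mono)
    ultimately show ?thesis by linarith
  next
    case False
    then have "\<alpha> * (\<beta> + 1) * \<eta> * (T - \<eta>) / (2 * T - \<alpha> * (\<beta> + 1) * \<eta>^2) * u \<tau> \<le> u T"
      using bounds_if_max_before_eta(2)[of \<tau>] assms denominator_pos by (simp add: field_simps)
    moreover have "\<gamma> * u \<tau> \<le> \<alpha> * (\<beta> + 1) * \<eta> * (T - \<eta>) / (2 * T - \<alpha> * (\<beta> + 1) * \<eta>^2) * u \<tau>"
      using gamma_const_le(3) u\<tau> by (rule mult_right_mono)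
    moreover have "u T \<le> u \<eta>" using bounds_if_max_before_eta(1)[of \<tau>] assms False by simp
    ultimately show ?thesis by linarith
  qed
qed

lemma gamma_bound_on_right:
  assumes "x \<in> {\<eta>..T}"
  shows "\<gamma> * sup_norm T u \<le> u x"
proof -
  obtain \<tau> where \<tau>: "\<tau> \<in> {0..T}" and max: "\<And>t. t \<in> {0..T} \<Longrightarrow> u t \<le> u \<tau>"
    using continuous_attains_sup[OF compact_Icc _ continuous] eta_pos eta_less by force
  have "sup_norm T u = u \<tau>"
    unfolding sup_norm_def by (rule cSup_eq_maximum) (use \<tau> max nonneg in auto)
  moreover have "min (u \<eta>) (u T) \<le> u x"
    using concave_on_Icc_min_le[OF concave_on_subset[OF concave] assms] eta_pos by simp
  moreover have "\<gamma> * u \<tau> \<le> min (u \<eta>) (u T)"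
    using gamma_bound_at_max[of \<tau>] \<tau> max by simp
  ultimately show ?thesis by (metis order_trans)
qed

end

theorem lemma2p4:
  fixes T \<eta> \<alpha> \<beta> :: real and y u :: "real \<Rightarrow> real"
  assumes "T > 0" and "0 < \<eta>" and "\<eta> < T"
    and "0 < \<alpha>" and "\<alpha> < 2 * T / \<eta>^2"
    and "0 \<le> \<beta>"
    and "\<beta> < (2 * T - \<alpha> * \<eta>^2) / (\<alpha> * \<eta>^2 - 2 * \<eta> + 2 * T)"
    and "continuous_on {0..T} y" and "\<forall>t\<in>{0..T}. y t \<ge> 0"
    and "is_solution T \<eta> \<alpha> \<beta> y u"
  shows "0 < gamma_const T \<eta> \<alpha> \<beta> \<and> gamma_const T \<eta> \<alpha> \<beta> < 1 \<and>
         Inf (u ` {\<eta>..T}) \<ge> gamma_const T \<eta> \<alpha> \<beta> * sup_norm T u"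
proof -
  interpret concave_bvp_solution T \<eta> \<alpha> \<beta> u
  proof
    show "concave_on {0..T} u"
      using is_solution_concave_on[OF assms(10,1)] assms(9) by simp
    show "continuous_on {0..T} u"
      using assms(10) by (simp add: is_solution_def C2_on_imp_continuous_on)
  qed (use assms in \<open>auto simp: is_solution_def\<close>)
  have "gamma_const T \<eta> \<alpha> \<beta> * sup_norm T u \<le> Inf (u ` {\<eta>..T})"
    by (rule cInf_greatest) (use gamma_bound_on_right assms(3) in auto)
  with gamma_const_pos gamma_const_less_one show ?thesis by simp
qed

end
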